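(* Let $(\mathfrak g,\langle\cdot,\cdot\rangle)$ be a finite-dimensional real Lie algebra with a non-degenerate symmetric bilinear form which is ad-invariant, i.e. $\langle[X,Y],Z\rangle=-\langle Y,[X,Z]\rangle$ for all $X,Y,Z$, and which is flat, meaning the connection $\nabla_XY=\tfrac12[X,Y]$ has zero curvature (equivalently $\mathfrak g$ is nilpotent of class at most two). Then there exist an abelian Lie algebra $\mathfrak z$ with non-degenerate scalar product, a vector space $\mathfrak a$ and an alternating three-form $F\in\Lambda^3\mathfrak a^*$ such that $(\mathfrak g,\langle\cdot,\cdot\rangle)$ is isomorphic, as a metric Lie algebra, to the orthogonal direct product $(\mathfrak z,\langle\cdot,\cdot\rangle)\oplus(\mathfrak t_{\mathfrak a,F},\langle\cdot,\cdot\rangle_o)$.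
   Context: For a vector space $\mathfrak a$ and $F\in\Lambda^3\mathfrak a^*$, define $\omega_F:\mathfrak a\times\mathfrak a\to\mathfrak a^*$ by $\omega_F(u,v)(w)=F(u,v,w)$. The Lie algebra $\mathfrak t_{\mathfrak a,F}$ is the vector space $\mathfrak a^*\oplus\mathfrak a$ with bracket $[(\lambda,u),(\lambda',u')]=(\omega_F(u,u'),0)$. The scalar product $\langle\cdot,\cdot\rangle_o$ on $\mathfrak a^*\oplus\mathfrak a$ (of signature $(m,m)$, $m=\dim\mathfrak a$) is $\langle(\lambda,u),(\lambda',u')\rangle_o=\lambda(u')+\lambda'(u)$, so that $\mathfrak a$ and $\mathfrak a^*$ are totally isotropic. *)

theory Defs
  imports "HOL-Analysis.Analysis"
begin

text \<open>A finite-dimensional real vector space is modelled by a type of class euclidean_space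
(its inner product plays no role). The Lie bracket and the scalar product are explicit.\<close>

definition lie_algebra :: "('g::real_vector \<Rightarrow> 'g \<Rightarrow> 'g) \<Rightarrow> bool" where
  "lie_algebra br \<longleftrightarrow> bilinear br \<and> (\<forall>x. br x x = 0) \<and>
     (\<forall>x y z. br x (br y z) + br y (br z x) + br z (br x y) = 0)"

definition nondeg_sym_form :: "('g::real_vector \<Rightarrow> 'g \<Rightarrow> real) \<Rightarrow> bool" where
  "nondeg_sym_form B \<longleftrightarrow> bilinear B \<and> (\<forall>x y. B x y = B y x) \<and>
     (\<forall>x. (\<forall>y. B x y = 0) \<longrightarrow> x = 0)"

definition ad_invariant :: "('g \<Rightarrow> 'g \<Rightarrow> 'g) \<Rightarrow> ('g \<Rightarrow> 'g \<Rightarrow> real) \<Rightarrow> bool" where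
  "ad_invariant br B \<longleftrightarrow> (\<forall>x y z. B (br x y) z = - B y (br x z))"

definition half_conn :: "('g::real_vector \<Rightarrow> 'g \<Rightarrow> 'g) \<Rightarrow> 'g \<Rightarrow> 'g \<Rightarrow> 'g" where
  "half_conn br x y = (1/2) *\<^sub>R br x y"

definition curvature :: "('g::real_vector \<Rightarrow> 'g \<Rightarrow> 'g) \<Rightarrow> 'g \<Rightarrow> 'g \<Rightarrow> 'g \<Rightarrow> 'g" where
  "curvature br x y z =
     half_conn br x (half_conn br y z) - half_conn br y (half_conn br x z)
     - half_conn br (br x y) z"

definition flat :: "('g::real_vector \<Rightarrow> 'g \<Rightarrow> 'g) \<Rightarrow> bool" where
  "flat br \<longleftrightarrow> (\<forall>x y z. curvature br x y z = 0)"

text \<open>R^n is modelled as functions nat => real vanishing outside {0..<n}.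
  z = R^p with the scalar product given by a symmetric matrix S (nondegenerate),
  a = R^m, a* = R^m via the dual basis, so lambda(u) = sum_i lambda_i u_i.\<close>

definition vec_on :: "nat \<Rightarrow> (nat \<Rightarrow> real) set" where
  "vec_on n = {v. \<forall>i\<ge>n. v i = 0}"

definition sform :: "nat \<Rightarrow> (nat \<Rightarrow> nat \<Rightarrow> real) \<Rightarrow> (nat \<Rightarrow> real) \<Rightarrow> (nat \<Rightarrow> real) \<Rightarrow> real" where
  "sform p S v w = (\<Sum>i<p. \<Sum>j<p. S i j * v i * w j)"

definition valid_zform :: "nat \<Rightarrow> (nat \<Rightarrow> nat \<Rightarrow> real) \<Rightarrow> bool" where
  "valid_zform p S \<longleftrightarrow> (\<forall>i j. S i j = S j i) \<and>
     (\<forall>v\<in>vec_on p. (\<forall>w\<in>vec_on p. sform p S v w = 0) \<longrightarrow> v = (\<lambda>_. 0))"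

definition three_form :: "nat \<Rightarrow> (nat \<Rightarrow> nat \<Rightarrow> nat \<Rightarrow> real) \<Rightarrow> (nat \<Rightarrow> real) \<Rightarrow> (nat \<Rightarrow> real) \<Rightarrow> (nat \<Rightarrow> real) \<Rightarrow> real" where
  "three_form m C u v w = (\<Sum>i<m. \<Sum>j<m. \<Sum>k<m. C i j k * u i * v j * w k)"

definition alternating3 :: "(nat \<Rightarrow> nat \<Rightarrow> nat \<Rightarrow> real) \<Rightarrow> bool" where
  "alternating3 C \<longleftrightarrow> (\<forall>i j k. C i j k = - C j i k \<and> C i j k = - C i k j)"

text \<open>omega_F(u,v) as an element of a*, in dual coordinates: component k is F(u,v,e_k).\<close>
definition omegaF :: "nat \<Rightarrow> (nat \<Rightarrow> nat \<Rightarrow> nat \<Rightarrow> real) \<Rightarrow> (nat \<Rightarrow> real) \<Rightarrow> (nat \<Rightarrow> real) \<Rightarrow> (nat \<Rightarrow> real)" where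
  "omegaF m C u v = (\<lambda>k. if k < m then three_form m C u v (\<lambda>l. if l = k then 1 else 0) else 0)"

type_synonym tvec = "(nat \<Rightarrow> real) \<times> (nat \<Rightarrow> real) \<times> (nat \<Rightarrow> real)"

text \<open>Carrier of z (+) (a* (+) a); a triple (z, lambda, u).\<close>
definition tcarrier :: "nat \<Rightarrow> nat \<Rightarrow> tvec set" where
  "tcarrier p m = {(z, l, u). z \<in> vec_on p \<and> l \<in> vec_on m \<and> u \<in> vec_on m}"

definition tbracket :: "nat \<Rightarrow> (nat \<Rightarrow> nat \<Rightarrow> nat \<Rightarrow> real) \<Rightarrow> tvec \<Rightarrow> tvec \<Rightarrow> tvec" where
  "tbracket m C X Y = (case X of (z, l, u) \<Rightarrow> case Y of (z', l', u') \<Rightarrow>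
      ((\<lambda>_. 0), omegaF m C u u', (\<lambda>_. 0)))"

definition tform :: "nat \<Rightarrow> nat \<Rightarrow> (nat \<Rightarrow> nat \<Rightarrow> real) \<Rightarrow> tvec \<Rightarrow> tvec \<Rightarrow> real" where
  "tform p m S X Y = (case X of (z, l, u) \<Rightarrow> case Y of (z', l', u') \<Rightarrow>
      sform p S z z' + (\<Sum>i<m. l i * u' i + l' i * u i))"

definition tlinear :: "('g::real_vector \<Rightarrow> tvec) \<Rightarrow> bool" where
  "tlinear \<phi> \<longleftrightarrow> (\<forall>i. linear (\<lambda>x. fst (\<phi> x) i) \<and> linear (\<lambda>x. fst (snd (\<phi> x)) i)
                        \<and> linear (\<lambda>x. snd (snd (\<phi> x)) i))"

definition metric_lie_iso ::
  "('g::real_vector \<Rightarrow> 'g \<Rightarrow> 'g) \<Rightarrow> ('g \<Rightarrow> 'g \<Rightarrow> real) \<Rightarrow> nat \<Rightarrow> nat \<Rightarrow>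
   (nat \<Rightarrow> nat \<Rightarrow> real) \<Rightarrow> (nat \<Rightarrow> nat \<Rightarrow> nat \<Rightarrow> real) \<Rightarrow> ('g \<Rightarrow> tvec) \<Rightarrow> bool" where
  "metric_lie_iso br B p m S C \<phi> \<longleftrightarrow>
     tlinear \<phi> \<and> bij_betw \<phi> UNIV (tcarrier p m) \<and>
     (\<forall>x y. \<phi> (br x y) = tbracket m C (\<phi> x) (\<phi> y)) \<and>
     (\<forall>x y. B x y = tform p m S (\<phi> x) (\<phi> y))"

end

theory Submission
  imports Defs
begin

(* Flatness of nabla_X Y = 1/2 [X,Y] means, by the Jacobi identity, that the
   curvature -1/4 [[X,Y],Z] vanishes, i.e. the Lie algebra g is two-step nilpotent: its derived
   algebra lies in the center Z.  By ad-invariance the orthogonal complement of Z is then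
   central as well.  It is built by induction on dim Q,
   splitting off one anisotropic vector or one hyperbolic pair at a time.
   Applied to Q = Z, the frame spans g (a vector orthogonal to it is orthogonal to Z, hence
   central, hence zero).  In the frame coordinates, z = span zs, a* = span ls, a = span us and
   F(u_i,u_j,u_k) = B([u_i,u_j],u_k); reading off B and the bracket in these coordinates gives
   the required isomorphism onto z (+) t_{a,F}. *)

section \<open>Symmetric bilinear forms and adapted frames\<close>

lemma dim_less_subspace:
  fixes Q :: "'a::euclidean_space set"
  assumes "subspace Q" "subspace Q'" "Q' \<subseteq> Q" "x \<in> Q" "x \<notin> Q'"
  shows "dim Q' < dim Q"
proof -
  have "x \<notin> span Q'" using assms(2,5) by (simp add: span_eq_iff[THEN iffD2, OF assms(2)])
  then have "span Q' \<subset> span Q" using span_mono[OF assms(3)] span_base[OF assms(4)] by blast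
  then show ?thesis by (rule dim_psubset)
qed

locale symmetric_form =
  fixes B :: "'a::euclidean_space \<Rightarrow> 'a \<Rightarrow> real"
  assumes B_bilinear: "bilinear B" and B_sym: "\<And>x y. B x y = B y x"
begin

lemmas B_simps = bilinear_ladd[OF B_bilinear] bilinear_radd[OF B_bilinear]
  bilinear_lmul[OF B_bilinear] bilinear_rmul[OF B_bilinear]
  bilinear_lsub[OF B_bilinear] bilinear_rsub[OF B_bilinear]
  bilinear_lzero[OF B_bilinear] bilinear_rzero[OF B_bilinear]
  bilinear_lneg[OF B_bilinear] bilinear_rneg[OF B_bilinear]

lemma B_sum_left: "B (sum f A) y = (\<Sum>a\<in>A. B (f a) y)"
  by (induct A rule: infinite_finite_induct) (simp_all add: B_simps)

lemma orthogonal_span: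
  assumes "\<And>s. s \<in> S \<Longrightarrow> B s v = 0" and "x \<in> span S"
  shows "B x v = 0"
proof -
  have "subspace {y. B y v = 0}" unfolding subspace_def by (simp add: B_simps)
  then have "span S \<subseteq> {y. B y v = 0}" using assms(1) by (intro span_minimal) auto
  then show ?thesis using assms(2) by auto
qed

definition nondegenerate_on :: "'a set \<Rightarrow> bool" where
  "nondegenerate_on V \<longleftrightarrow> (\<forall>x\<in>V. x \<noteq> 0 \<longrightarrow> (\<exists>y\<in>V. B x y \<noteq> 0))"

lemma nondegenerate_on_projection:
  assumes "nondegenerate_on V" "V' \<subseteq> V" "\<And>v. v \<in> V \<Longrightarrow> \<pi> v \<in> V'"
    and "\<And>w v. w \<in> V' \<Longrightarrow> v \<in> V \<Longrightarrow> B w (\<pi> v) = B w v"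
  shows "nondegenerate_on V'"
  unfolding nondegenerate_on_def
proof (intro ballI impI)
  fix w assume "w \<in> V'" "w \<noteq> 0"
  then obtain y where "y \<in> V" "B w y \<noteq> 0" using assms(1,2) unfolding nondegenerate_on_def by blast
  then show "\<exists>y\<in>V'. B w y \<noteq> 0" using assms(3,4) \<open>w \<in> V'\<close> by metis
qed

text \<open>By polarization, a subspace of isotropic vectors is totally isotropic.\<close>
lemma totally_isotropic:
  assumes "subspace Q" "\<And>x. x \<in> Q \<Longrightarrow> B x x = 0" "x \<in> Q" "y \<in> Q"
  shows "B x y = 0"
  using assms(2)[of "x + y"] assms(2)[OF assms(3)] assms(2)[OF assms(4)] assms
  by (simp add: B_simps subspace_add B_sym[of y x])

lemma hyperbolic_partner:
  assumes "subspace V" "nondegenerate_on V" "l \<in> V" "l \<noteq> 0" "B l l = 0"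
  shows "\<exists>u\<in>V. B l u = 1 \<and> B u u = 0"
proof -
  obtain w where w: "w \<in> V" "B l w \<noteq> 0" using assms(2-4) unfolding nondegenerate_on_def by blast
  define u0 where "u0 = (1 / B l w) *\<^sub>R w"
  define u where "u = u0 - (B u0 u0 / 2) *\<^sub>R l"
  have lu0: "B l u0 = 1" using w unfolding u0_def by (simp add: B_simps)
  have "B l u = 1" unfolding u_def by (simp add: B_simps lu0 assms(5))
  moreover have "B u u = 0" unfolding u_def by (simp add: B_simps lu0 assms(5) B_sym[of u0 l])
  moreover have "u \<in> V" unfolding u_def u0_def using w assms(1,3) by (simp add: subspace_diff subspace_scale)
  ultimately show ?thesis by blast
qed

definition adapted :: "nat \<Rightarrow> (nat \<Rightarrow> 'a) \<Rightarrow> nat \<Rightarrow> (nat \<Rightarrow> 'a) \<Rightarrow> (nat \<Rightarrow> 'a) \<Rightarrow> bool" where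
  "adapted p zs m ls us \<longleftrightarrow>
     (\<forall>i<p. \<forall>j<p. B (zs i) (zs j) \<noteq> 0 \<longleftrightarrow> i = j) \<and>
     (\<forall>i<m. \<forall>j<m. B (ls i) (ls j) = 0 \<and> B (us i) (us j) = 0 \<and> B (ls i) (us j) = (if i = j then 1 else 0)) \<and>
     (\<forall>i<p. \<forall>k<m. B (zs i) (ls k) = 0 \<and> B (zs i) (us k) = 0)"

text \<open>The frame vectors meant to lie in Q (the zs and ls), and the whole frame.\<close>
definition frame_core :: "nat \<Rightarrow> (nat \<Rightarrow> 'a) \<Rightarrow> nat \<Rightarrow> (nat \<Rightarrow> 'a) \<Rightarrow> 'a set" where
  "frame_core p zs m ls = zs ` {..<p} \<union> ls ` {..<m}"

definition frame_vectors :: "nat \<Rightarrow> (nat \<Rightarrow> 'a) \<Rightarrow> nat \<Rightarrow> (nat \<Rightarrow> 'a) \<Rightarrow> (nat \<Rightarrow> 'a) \<Rightarrow> 'a set" where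
  "frame_vectors p zs m ls us = frame_core p zs m ls \<union> us ` {..<m}"

definition frame_for :: "'a set \<Rightarrow> 'a set \<Rightarrow> nat \<Rightarrow> (nat \<Rightarrow> 'a) \<Rightarrow> nat \<Rightarrow> (nat \<Rightarrow> 'a) \<Rightarrow> (nat \<Rightarrow> 'a) \<Rightarrow> bool" where
  "frame_for V Q p zs m ls us \<longleftrightarrow> adapted p zs m ls us \<and>
     (\<forall>i<p. zs i \<in> Q) \<and> (\<forall>k<m. ls k \<in> Q \<and> us k \<in> V) \<and> Q \<subseteq> span (frame_core p zs m ls) \<and>
     (\<forall>q\<in>Q. (\<forall>s\<in>frame_vectors p zs m ls us. B q s = 0) \<longrightarrow> q = 0)"

lemma frame_forI:
  assumes "adapted p zs m ls us" "\<And>i. i < p \<Longrightarrow> zs i \<in> Q" "\<And>k. k < m \<Longrightarrow> ls k \<in> Q"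
    "\<And>k. k < m \<Longrightarrow> us k \<in> V" "Q \<subseteq> span (frame_core p zs m ls)"
    "\<And>q. q \<in> Q \<Longrightarrow> (\<And>s. s \<in> frame_vectors p zs m ls us \<Longrightarrow> B q s = 0) \<Longrightarrow> q = 0"
  shows "frame_for V Q p zs m ls us"
  using assms unfolding frame_for_def by blast

lemma frame_forD:
  assumes "frame_for V Q p zs m ls us"
  shows "adapted p zs m ls us" "\<And>i. i < p \<Longrightarrow> zs i \<in> Q" "\<And>k. k < m \<Longrightarrow> ls k \<in> Q"
    "\<And>k. k < m \<Longrightarrow> us k \<in> V" "Q \<subseteq> span (frame_core p zs m ls)"
    "\<And>q. q \<in> Q \<Longrightarrow> (\<And>s. s \<in> frame_vectors p zs m ls us \<Longrightarrow> B q s = 0) \<Longrightarrow> q = 0"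
  using assms unfolding frame_for_def by blast+

lemma frame_for_empty: "Q \<subseteq> {0} \<Longrightarrow> frame_for V Q 0 zs 0 ls us"
  unfolding frame_for_def adapted_def frame_core_def by auto

lemma frame_vectors_add_z:
  "frame_core p zs m ls \<subseteq> frame_core (Suc p) (zs(p:=x)) m ls"
  "x \<in> frame_core (Suc p) (zs(p:=x)) m ls"
  "frame_vectors p zs m ls us \<subseteq> frame_vectors (Suc p) (zs(p:=x)) m ls us"
  "x \<in> frame_vectors (Suc p) (zs(p:=x)) m ls us"
  unfolding frame_vectors_def frame_core_def by (auto simp: lessThan_Suc image_iff)

lemma frame_vectors_add_pair:
  "frame_core p zs m ls \<subseteq> frame_core p zs (Suc m) (ls(m:=l))"
  "l \<in> frame_core p zs (Suc m) (ls(m:=l))"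
  "frame_vectors p zs m ls us \<subseteq> frame_vectors p zs (Suc m) (ls(m:=l)) (us(m:=u))"
  "u \<in> frame_vectors p zs (Suc m) (ls(m:=l)) (us(m:=u))"
  unfolding frame_vectors_def frame_core_def by (auto simp: lessThan_Suc image_iff)

lemma span_shift: "q - c *\<^sub>R v \<in> span S \<Longrightarrow> v \<in> S \<Longrightarrow> q \<in> span S"
  using span_add[of "q - c *\<^sub>R v" S "c *\<^sub>R v"] span_scale[OF span_base] by fastforce

lemma frame_for_add_anisotropic:
  assumes Q: "subspace Q" "Q \<subseteq> V" and x: "x \<in> Q" "B x x \<noteq> 0"
    and F: "frame_for {v\<in>V. B x v = 0} {q\<in>Q. B x q = 0} p zs m ls us"
  shows "frame_for V Q (Suc p) (zs(p:=x)) m ls us"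
proof (rule frame_forI)
  have zs: "zs i \<in> Q" "B x (zs i) = 0" "B (zs i) x = 0" if "i < p" for i
    using frame_forD(2)[OF F that] B_sym[of x "zs i"] by auto
  have lu: "ls k \<in> Q" "us k \<in> V" "B x (ls k) = 0" "B x (us k) = 0" if "k < m" for k
    using frame_forD(3,4)[OF F that] by auto
  show "adapted (Suc p) (zs(p:=x)) m ls us"
    using frame_forD(1)[OF F] zs lu x(2) unfolding adapted_def by (auto simp: less_Suc_eq)
  show "(zs(p:=x)) i \<in> Q" if "i < Suc p" for i using that zs(1) x(1) by (auto simp: less_Suc_eq)
  show "ls k \<in> Q" "us k \<in> V" if "k < m" for k using lu that by auto
  show "Q \<subseteq> span (frame_core (Suc p) (zs(p:=x)) m ls)"
  proof
    fix q assume q: "q \<in> Q"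
    have "q - (B x q / B x x) *\<^sub>R x \<in> {q\<in>Q. B x q = 0}"
      using q x Q(1) by (simp add: B_simps subspace_diff subspace_scale)
    then have "q - (B x q / B x x) *\<^sub>R x \<in> span (frame_core (Suc p) (zs(p:=x)) m ls)"
      using frame_forD(5)[OF F] span_mono[OF frame_vectors_add_z(1)] by blast
    then show "q \<in> span (frame_core (Suc p) (zs(p:=x)) m ls)"
      using frame_vectors_add_z(2) by (rule span_shift)
  qed
  show "q = 0" if "q \<in> Q" "\<And>s. s \<in> frame_vectors (Suc p) (zs(p:=x)) m ls us \<Longrightarrow> B q s = 0" for q
  proof (rule frame_forD(6)[OF F])
    show "q \<in> {q\<in>Q. B x q = 0}" using that(1) that(2)[OF frame_vectors_add_z(4)] B_sym[of q x] by simp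
  qed (use that(2) frame_vectors_add_z(3) in blast)
qed

lemma frame_for_add_pair:
  assumes Q: "subspace Q" "Q \<subseteq> V" "\<And>q. q \<in> Q \<Longrightarrow> B l q = 0"
    and lu: "l \<in> Q" "u \<in> V" "B l u = 1" "B u u = 0"
    and F: "frame_for {v\<in>V. B l v = 0 \<and> B u v = 0} {q\<in>Q. B u q = 0} p zs m ls us"
  shows "frame_for V Q p zs (Suc m) (ls(m:=l)) (us(m:=u))"
proof (rule frame_forI)
  have ul: "B u l = 1" using lu(3) B_sym by metis
  have zs: "zs i \<in> Q" "B l (zs i) = 0" "B u (zs i) = 0" "B (zs i) l = 0" "B (zs i) u = 0" if "i < p" for i
    using frame_forD(2)[OF F that] Q(3) B_sym[of l "zs i"] B_sym[of u "zs i"] by auto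
  have ls: "ls k \<in> Q" "B l (ls k) = 0" "B u (ls k) = 0" "B (ls k) l = 0" "B (ls k) u = 0" if "k < m" for k
    using frame_forD(3)[OF F that] Q(3) B_sym[of l "ls k"] B_sym[of u "ls k"] by auto
  have us: "us k \<in> V" "B l (us k) = 0" "B u (us k) = 0" "B (us k) l = 0" "B (us k) u = 0" if "k < m" for k
    using frame_forD(4)[OF F that] B_sym[of l "us k"] B_sym[of u "us k"] by auto
  show "adapted p zs (Suc m) (ls(m:=l)) (us(m:=u))"
    using frame_forD(1)[OF F] zs ls us ul lu(3,4) Q(3)[OF lu(1)] unfolding adapted_def
    by (auto simp: less_Suc_eq)
  show "zs i \<in> Q" if "i < p" for i using zs that by auto
  show "(ls(m:=l)) k \<in> Q" "(us(m:=u)) k \<in> V" if "k < Suc m" for k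
    using that ls(1) us(1) lu(1,2) by (auto simp: less_Suc_eq)
  show "Q \<subseteq> span (frame_core p zs (Suc m) (ls(m:=l)))"
  proof
    fix q assume q: "q \<in> Q"
    have "q - B u q *\<^sub>R l \<in> {q\<in>Q. B u q = 0}"
      using q lu(1) ul Q(1) by (simp add: B_simps subspace_diff subspace_scale)
    then have "q - B u q *\<^sub>R l \<in> span (frame_core p zs (Suc m) (ls(m:=l)))"
      using frame_forD(5)[OF F] span_mono[OF frame_vectors_add_pair(1)] by blast
    then show "q \<in> span (frame_core p zs (Suc m) (ls(m:=l)))"
      using frame_vectors_add_pair(2) by (rule span_shift)
  qed
  show "q = 0" if "q \<in> Q" "\<And>s. s \<in> frame_vectors p zs (Suc m) (ls(m:=l)) (us(m:=u)) \<Longrightarrow> B q s = 0" for q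
  proof (rule frame_forD(6)[OF F])
    show "q \<in> {q\<in>Q. B u q = 0}" using that(1) that(2)[OF frame_vectors_add_pair(4)] B_sym[of q u] by simp
  qed (use that(2) frame_vectors_add_pair(3) in blast)
qed

text \<open>Witt-type decomposition: every subspace Q of a nondegenerate subspace V admits an
  adapted frame, built by splitting off anisotropic vectors and hyperbolic pairs.\<close>
lemma frame_exists:
  assumes "subspace V" "nondegenerate_on V" "subspace Q" "Q \<subseteq> V"
  shows "\<exists>p zs m ls us. frame_for V Q p zs m ls us"
  using assms
proof (induction "dim Q" arbitrary: V Q rule: less_induct)
  case less
  note V = less.prems(1,2) and Q = less.prems(3,4)
  consider (anisotropic) x where "x \<in> Q" "B x x \<noteq> 0"
    | (isotropic) l where "l \<in> Q" "l \<noteq> 0" "\<And>x. x \<in> Q \<Longrightarrow> B x x = 0"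
    | (zero) "Q \<subseteq> {0}" by blast
  then show ?case
  proof cases
    case anisotropic
    let ?V' = "{v\<in>V. B x v = 0}" and ?Q' = "{q\<in>Q. B x q = 0}"
    have "nondegenerate_on ?V'"
    proof (rule nondegenerate_on_projection[OF V(2), where \<pi> = "\<lambda>v. v - (B x v / B x x) *\<^sub>R x"])
      show "v - (B x v / B x x) *\<^sub>R x \<in> ?V'" if "v \<in> V" for v
        using that V(1) Q(2) anisotropic by (auto simp: B_simps subspace_diff subspace_scale)
      show "B w (v - (B x v / B x x) *\<^sub>R x) = B w v" if "w \<in> ?V'" "v \<in> V" for w v
        using that B_sym[of w x] by (simp add: B_simps)
    qed blast
    moreover have "subspace ?V'" "subspace ?Q'"
      using V Q unfolding subspace_def by (auto simp: B_simps)
    moreover have "dim ?Q' < dim Q" by (rule dim_less_subspace) (use Q anisotropic \<open>subspace ?Q'\<close> in auto)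
    ultimately obtain p zs m ls us where "frame_for ?V' ?Q' p zs m ls us"
      using less.hyps[of ?Q' ?V'] Q by blast
    then show ?thesis using frame_for_add_anisotropic Q anisotropic by blast
  next
    case isotropic
    have Bl: "B l q = 0" if "q \<in> Q" for q by (rule totally_isotropic) (use Q isotropic that in auto)
    obtain u where u: "u \<in> V" "B l u = 1" "B u u = 0"
      using hyperbolic_partner[OF V] isotropic Q Bl by blast
    let ?V' = "{v\<in>V. B l v = 0 \<and> B u v = 0}" and ?Q' = "{q\<in>Q. B u q = 0}"
    have "nondegenerate_on ?V'"
    proof (rule nondegenerate_on_projection[OF V(2), where \<pi> = "\<lambda>v. v - B u v *\<^sub>R l - B l v *\<^sub>R u"])
      show "v - B u v *\<^sub>R l - B l v *\<^sub>R u \<in> ?V'" if "v \<in> V" for v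
        using that V(1) Q(2) isotropic(1) u Bl[OF isotropic(1)] B_sym[of u l]
        by (auto simp: B_simps subspace_diff subspace_scale)
      show "B w (v - B u v *\<^sub>R l - B l v *\<^sub>R u) = B w v" if "w \<in> ?V'" "v \<in> V" for w v
        using that B_sym[of w l] B_sym[of w u] by (simp add: B_simps)
    qed blast
    moreover have "subspace ?V'" "subspace ?Q'"
      using V Q unfolding subspace_def by (auto simp: B_simps)
    moreover have "dim ?Q' < dim Q"
      by (rule dim_less_subspace) (use Q isotropic u \<open>subspace ?Q'\<close> B_sym[of u l] in auto)
    moreover have "?Q' \<subseteq> ?V'" using Q Bl by auto
    ultimately obtain p zs m ls us where "frame_for ?V' ?Q' p zs m ls us"
      using less.hyps[of ?Q' ?V'] by blast
    then show ?thesis using frame_for_add_pair[OF Q Bl] isotropic u by blast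
  next
    case zero
    then show ?thesis using frame_for_empty by blast
  qed
qed

end

section \<open>Flat metric Lie algebras are two-step nilpotent\<close>

lemma alternating_antisym:
  assumes "bilinear br" "\<And>x. br x x = 0"
  shows "br a b = - br b a"
proof -
  have "br (a + b) (a + b) = (br a a + br a b) + (br b a + br b b)"
    unfolding bilinear_ladd[OF assms(1)] bilinear_radd[OF assms(1)] by (simp only: add_ac)
  then have "br a b + br b a = 0" using assms(2)[of a] assms(2)[of b] assms(2)[of "a + b"] by simp
  then show ?thesis by (simp add: eq_neg_iff_add_eq_0)
qed

text \<open>By the Jacobi identity the curvature of nabla_X Y = 1/2 [X,Y] is -1/4 [[X,Y],Z];
  hence flatness is equivalent to two-step nilpotency.\<close>
lemma curvature_half_connection:
  assumes "lie_algebra br"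
  shows "curvature br x y z = - (1/4) *\<^sub>R br (br x y) z"
proof -
  have bil: "bilinear br" and alt: "\<And>x. br x x = 0"
    and jac: "\<And>x y z. br x (br y z) + br y (br z x) + br z (br x y) = 0"
    using assms unfolding lie_algebra_def by auto
  note anti = alternating_antisym[OF bil alt]
  have "br y (br z x) = - br y (br x z)" by (subst anti[of z x]) (simp add: bilinear_rneg[OF bil])
  then have jacobi: "br x (br y z) - br y (br x z) = br (br x y) z"
    using jac[of x y z] anti[of z "br x y"] by (simp add: algebra_simps)
  have "curvature br x y z = (1/4) *\<^sub>R (br x (br y z) - br y (br x z)) - (1/2) *\<^sub>R br (br x y) z"
    unfolding curvature_def half_conn_def by (simp add: bilinear_rmul[OF bil] scaleR_diff_right)
  also have "\<dots> = - (1/4) *\<^sub>R br (br x y) z"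
    unfolding jacobi by (simp add: scaleR_left_diff_distrib[symmetric])
  finally show ?thesis .
qed

lemma flat_two_step_nilpotent:
  assumes "lie_algebra br" "flat br"
  shows "br (br x y) z = 0"
  using assms curvature_half_connection[OF assms(1), of x y z] unfolding flat_def by simp

lemma sum_single:
  "finite A \<Longrightarrow> j \<in> A \<Longrightarrow> (\<And>i. i \<in> A \<Longrightarrow> i \<noteq> j \<Longrightarrow> f i = 0) \<Longrightarrow> sum f A = f j"
  by (subst sum.remove[of A j]) (auto intro: sum.neutral)

lemma sum_lessThan_cong: "(\<And>i. i < n \<Longrightarrow> f i = g i) \<Longrightarrow> sum f {..<n} = sum g {..<n}"
  by (rule sum.cong) auto

locale nil2_metric_lie = symmetric_form B for B :: "'g::euclidean_space \<Rightarrow> 'g \<Rightarrow> real" +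
  fixes br :: "'g \<Rightarrow> 'g \<Rightarrow> 'g"
  assumes br_bilinear: "bilinear br" and br_alternating: "\<And>x. br x x = 0"
    and B_nondegenerate: "\<And>x. (\<forall>y. B x y = 0) \<Longrightarrow> x = 0"
    and ad_inv: "\<And>x y z. B (br x y) z = - B y (br x z)"
    and two_step: "\<And>x y z. br (br x y) z = 0"
begin

lemmas br_simps = bilinear_ladd[OF br_bilinear] bilinear_radd[OF br_bilinear]
  bilinear_lmul[OF br_bilinear] bilinear_rmul[OF br_bilinear]
  bilinear_lsub[OF br_bilinear] bilinear_rsub[OF br_bilinear]
  bilinear_lzero[OF br_bilinear] bilinear_rzero[OF br_bilinear]

definition central :: "'g \<Rightarrow> bool" where "central y \<longleftrightarrow> (\<forall>a. br a y = 0)"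

lemma central_commutes: "central y \<Longrightarrow> br a y = 0" "central y \<Longrightarrow> br y a = 0"
  unfolding central_def by (metis alternating_antisym[OF br_bilinear br_alternating] neg_equal_0_iff_equal)+

lemma subspace_center: "subspace (Collect central)"
  unfolding subspace_def central_def by (simp add: br_simps)

lemma central_bracket: "central (br x y)"
  unfolding central_def
  by (metis two_step alternating_antisym[OF br_bilinear br_alternating] neg_equal_0_iff_equal)

text \<open>Central vectors are orthogonal to all brackets (ad-invariance).\<close>
lemma bracket_orthogonal_central: "central c \<Longrightarrow> B (br x y) c = 0"
  using ad_inv[of x y c] central_commutes(1) by (simp add: B_simps)

text \<open>Since the derived algebra is central, the orthogonal complement of the center is
  contained in the center.\<close>
lemma orthogonal_to_center_central:
  assumes "\<And>q. central q \<Longrightarrow> B d q = 0"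
  shows "central d"
  unfolding central_def
proof
  fix a
  have "B (br a d) b = 0" for b
    using ad_inv[of a d b] assms[OF central_bracket[of a b]] by simp
  then show "br a d = 0" using B_nondegenerate by blast
qed

lemma center_frame_exists: "\<exists>p zs m ls us. frame_for UNIV (Collect central) p zs m ls us"
  by (rule frame_exists) (use B_nondegenerate subspace_center in \<open>auto simp: nondegenerate_on_def\<close>)

end

section \<open>Coordinates with respect to a frame adapted to the center\<close>

text \<open>A frame of the whole algebra adapted to its center. The coordinates of x are
  (B x (zs i) / B (zs i) (zs i), B x (us k), B x (ls k)); psi recombines coordinates.\<close>
locale central_frame = nil2_metric_lie B br for B :: "'g::euclidean_space \<Rightarrow> 'g \<Rightarrow> real" and br +
  fixes p zs m ls us
  assumes frame: "frame_for UNIV (Collect central) p zs m ls us"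
begin

definition cz :: "nat \<Rightarrow> real" where "cz i = B (zs i) (zs i)"

definition phi :: "'g \<Rightarrow> tvec" where
  "phi x = ((\<lambda>i. if i < p then B x (zs i) / cz i else 0), (\<lambda>k. if k < m then B x (us k) else 0),
            (\<lambda>k. if k < m then B x (ls k) else 0))"

definition psi :: "tvec \<Rightarrow> 'g" where
  "psi t = (\<Sum>i<p. fst t i *\<^sub>R zs i) + (\<Sum>k<m. fst (snd t) k *\<^sub>R ls k) + (\<Sum>k<m. snd (snd t) k *\<^sub>R us k)"

lemma cz_nonzero: "i < p \<Longrightarrow> cz i \<noteq> 0"
  using frame_forD(1)[OF frame] unfolding adapted_def cz_def by auto

lemma gram:
  "i < p \<Longrightarrow> j < p \<Longrightarrow> B (zs i) (zs j) = (if i = j then cz j else 0)"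
  "i < m \<Longrightarrow> j < m \<Longrightarrow> B (ls i) (ls j) = 0"
  "i < m \<Longrightarrow> j < m \<Longrightarrow> B (us i) (us j) = 0"
  "i < m \<Longrightarrow> j < m \<Longrightarrow> B (ls i) (us j) = (if i = j then 1 else 0)"
  "i < m \<Longrightarrow> j < m \<Longrightarrow> B (us i) (ls j) = (if i = j then 1 else 0)"
  "i < p \<Longrightarrow> k < m \<Longrightarrow> B (zs i) (ls k) = 0" "i < p \<Longrightarrow> k < m \<Longrightarrow> B (ls k) (zs i) = 0"
  "i < p \<Longrightarrow> k < m \<Longrightarrow> B (zs i) (us k) = 0" "i < p \<Longrightarrow> k < m \<Longrightarrow> B (us k) (zs i) = 0"
  using frame_forD(1)[OF frame] B_sym unfolding adapted_def cz_def by metis+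

lemma central_frame_vectors: "i < p \<Longrightarrow> central (zs i)" "k < m \<Longrightarrow> central (ls k)"
  using frame_forD(2,3)[OF frame] by auto

lemma B_psi_zs: "j < p \<Longrightarrow> B (psi t) (zs j) = fst t j * cz j"
proof -
  assume j: "j < p"
  have "(\<Sum>i<p. fst t i * B (zs i) (zs j)) = fst t j * B (zs j) (zs j)"
    by (rule sum_single) (use j gram in auto)
  moreover have "(\<Sum>k<m. fst (snd t) k * B (ls k) (zs j)) = 0" by (rule sum.neutral) (use j gram in auto)
  moreover have "(\<Sum>k<m. snd (snd t) k * B (us k) (zs j)) = 0" by (rule sum.neutral) (use j gram in auto)
  ultimately show ?thesis unfolding psi_def cz_def by (simp add: B_simps B_sum_left)
qed

lemma B_psi_us: "j < m \<Longrightarrow> B (psi t) (us j) = fst (snd t) j"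
proof -
  assume j: "j < m"
  have "(\<Sum>k<m. fst (snd t) k * B (ls k) (us j)) = fst (snd t) j"
    by (subst sum_single[of _ j]) (use j gram in auto)
  moreover have "(\<Sum>i<p. fst t i * B (zs i) (us j)) = 0" by (rule sum.neutral) (use j gram in auto)
  moreover have "(\<Sum>k<m. snd (snd t) k * B (us k) (us j)) = 0" by (rule sum.neutral) (use j gram in auto)
  ultimately show ?thesis unfolding psi_def by (simp add: B_simps B_sum_left)
qed

lemma B_psi_ls: "j < m \<Longrightarrow> B (psi t) (ls j) = snd (snd t) j"
proof -
  assume j: "j < m"
  have "(\<Sum>k<m. snd (snd t) k * B (us k) (ls j)) = snd (snd t) j"
    by (subst sum_single[of _ j]) (use j gram in auto)
  moreover have "(\<Sum>i<p. fst t i * B (zs i) (ls j)) = 0" by (rule sum.neutral) (use j gram in auto)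
  moreover have "(\<Sum>k<m. fst (snd t) k * B (ls k) (ls j)) = 0" by (rule sum.neutral) (use j gram in auto)
  ultimately show ?thesis unfolding psi_def by (simp add: B_simps B_sum_left)
qed

text \<open>The frame spans: x - psi (phi x) is orthogonal to the frame, hence to the center
  (spanned by the zs and ls), hence central, hence zero.\<close>
lemma psi_phi: "psi (phi x) = x"
proof -
  define d where "d = x - psi (phi x)"
  have orth_frame: "B d s = 0" if "s \<in> frame_vectors p zs m ls us" for s
  proof -
    from that consider (z) i where "i < p" "s = zs i" | (l) k where "k < m" "s = ls k"
      | (u) k where "k < m" "s = us k" unfolding frame_vectors_def frame_core_def by auto
    then show ?thesis
      by cases (use B_psi_zs[of _ "phi x"] B_psi_ls[of _ "phi x"] B_psi_us[of _ "phi x"] cz_nonzero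
          in \<open>auto simp: d_def B_simps phi_def\<close>)
  qed
  have "B d q = 0" if "central q" for q
  proof -
    have "q \<in> span (frame_vectors p zs m ls us)"
      using frame_forD(5)[OF frame] that span_mono[of "frame_core p zs m ls" "frame_vectors p zs m ls us"]
      unfolding frame_vectors_def by blast
    then show ?thesis using orthogonal_span[of _ d q] orth_frame B_sym by metis
  qed
  then have "central d" by (rule orthogonal_to_center_central)
  then show ?thesis using frame_forD(6)[OF frame, of d] orth_frame unfolding d_def by simp
qed

lemma phi_psi: "t \<in> tcarrier p m \<Longrightarrow> phi (psi t) = t"
proof -
  assume t: "t \<in> tcarrier p m"
  obtain a b c where abc: "t = (a, b, c)" by (cases t) auto
  have "a i = 0" if "i \<ge> p" for i using that t abc unfolding tcarrier_def vec_on_def by auto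
  moreover have "b i = 0" "c i = 0" if "i \<ge> m" for i
    using that t abc unfolding tcarrier_def vec_on_def by auto
  ultimately show ?thesis unfolding phi_def using B_psi_zs[of _ t] B_psi_us[of _ t] B_psi_ls[of _ t] cz_nonzero abc
    by (auto intro!: ext simp: not_less)
qed

lemma phi_bij: "bij_betw phi UNIV (tcarrier p m)"
proof (rule bij_betw_byWitness[where f' = psi])
  show "phi ` UNIV \<subseteq> tcarrier p m" unfolding phi_def tcarrier_def vec_on_def by auto
qed (use psi_phi phi_psi in auto)

lemma phi_linear: "tlinear phi"
  unfolding tlinear_def phi_def by (auto intro!: linearI simp: B_simps add_divide_distrib)

definition Sm :: "nat \<Rightarrow> nat \<Rightarrow> real" where "Sm i j = (if i = j \<and> i < p then cz i else 0)"

definition Cm :: "nat \<Rightarrow> nat \<Rightarrow> nat \<Rightarrow> real" where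
  "Cm i j k = (if i < m \<and> j < m \<and> k < m then B (br (us i) (us j)) (us k) else 0)"

definition a_part :: "'g \<Rightarrow> 'g" where "a_part x = (\<Sum>k<m. B x (ls k) *\<^sub>R us k)"

lemma central_remainder: "central (x - a_part x)"
proof -
  have "x = psi (phi x)" by (simp add: psi_phi)
  also have "\<dots> = (\<Sum>i<p. (B x (zs i) / cz i) *\<^sub>R zs i) + (\<Sum>k<m. B x (us k) *\<^sub>R ls k) + a_part x"
    unfolding psi_def phi_def a_part_def by (simp cong: sum_lessThan_cong)
  finally have "x - a_part x = (\<Sum>i<p. (B x (zs i) / cz i) *\<^sub>R zs i) + (\<Sum>k<m. B x (us k) *\<^sub>R ls k)"
    by (simp add: algebra_simps)
  moreover have "(\<Sum>i<p. (B x (zs i) / cz i) *\<^sub>R zs i) \<in> Collect central"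
    by (intro subspace_sum[OF subspace_center] subspace_scale[OF subspace_center]) (use central_frame_vectors in auto)
  moreover have "(\<Sum>k<m. B x (us k) *\<^sub>R ls k) \<in> Collect central"
    by (intro subspace_sum[OF subspace_center] subspace_scale[OF subspace_center]) (use central_frame_vectors in auto)
  ultimately show ?thesis using subspace_add[OF subspace_center] by fastforce
qed

lemma bracket_a_part: "br x y = br (a_part x) (a_part y)"
proof -
  have "br x y = br (a_part x + (x - a_part x)) y" by simp
  also have "\<dots> = br (a_part x) y" using central_commutes(2)[OF central_remainder] by (simp add: br_simps)
  also have "\<dots> = br (a_part x) (a_part y + (y - a_part y))" by simp
  also have "\<dots> = br (a_part x) (a_part y)" using central_commutes(1)[OF central_remainder] by (simp add: br_simps)
  finally show ?thesis .
qed

lemma B_bracket_us: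
  "k < m \<Longrightarrow> B (br x y) (us k) = (\<Sum>i<m. \<Sum>j<m. Cm i j k * B x (ls i) * B y (ls j))"
proof -
  assume k: "k < m"
  have "B (br x y) (us k) = (\<Sum>(i,j)\<in>{..<m}\<times>{..<m}. B (br (B x (ls i) *\<^sub>R us i) (B y (ls j) *\<^sub>R us j)) (us k))"
    unfolding bracket_a_part[of x y] a_part_def bilinear_sum[OF br_bilinear] B_sum_left by (rule sum.cong) auto
  also have "\<dots> = (\<Sum>i<m. \<Sum>j<m. Cm i j k * B x (ls i) * B y (ls j))"
    unfolding sum.cartesian_product by (rule sum.cong) (auto simp: Cm_def br_simps B_simps k)
  finally show ?thesis .
qed

lemma omegaF_coordinates:
  "k < m \<Longrightarrow> omegaF m Cm (\<lambda>k. if k < m then B x (ls k) else 0) (\<lambda>k. if k < m then B y (ls k) else 0) k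
     = (\<Sum>i<m. \<Sum>j<m. Cm i j k * B x (ls i) * B y (ls j))"
proof -
  assume k: "k < m"
  have "(\<Sum>k'<m. Cm i j k' * a * b * (if k' = k then 1 else 0)) = Cm i j k * a * b" for i j a b
    by (subst sum_single[of _ k]) (use k in auto)
  then show ?thesis unfolding omegaF_def three_form_def using k by (simp cong: sum_lessThan_cong)
qed

lemma omegaF_out_of_range: "\<not> k < m \<Longrightarrow> omegaF m C u v k = 0"
  by (simp add: omegaF_def)

text \<open>phi is a Lie algebra homomorphism: brackets have only a*-coordinates, given by omega_F.\<close>
lemma phi_bracket: "phi (br x y) = tbracket m Cm (phi x) (phi y)"
proof -
  have "B (br x y) (zs i) = 0" if "i < p" for i
    using bracket_orthogonal_central central_frame_vectors that by blast
  moreover have "B (br x y) (ls k) = 0" if "k < m" for k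
    using bracket_orthogonal_central central_frame_vectors that by blast
  ultimately show ?thesis unfolding tbracket_def
    by (auto intro!: ext simp: phi_def B_bracket_us omegaF_coordinates omegaF_out_of_range)
qed

text \<open>phi is an isometry: expand x = psi (phi x) and pair with y.\<close>
lemma phi_form: "B x y = tform p m Sm (phi x) (phi y)"
proof -
  have z_part: "sform p Sm (fst (phi x)) (fst (phi y)) = (\<Sum>i<p. (B x (zs i) / cz i) * B (zs i) y)"
    unfolding sform_def
  proof (rule sum.cong)
    fix i assume i: "i \<in> {..<p}"
    have "(\<Sum>j<p. Sm i j * fst (phi x) i * fst (phi y) j) = Sm i i * fst (phi x) i * fst (phi y) i"
      by (rule sum_single) (use i in \<open>auto simp: Sm_def\<close>)
    also have "\<dots> = (B x (zs i) / cz i) * B (zs i) y"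
      using i cz_nonzero[of i] by (simp add: phi_def Sm_def B_sym[of "zs i" y] field_simps)
    finally show "(\<Sum>j<p. Sm i j * fst (phi x) i * fst (phi y) j) = (B x (zs i) / cz i) * B (zs i) y" .
  qed simp
  have "B x y = B (psi (phi x)) y" by (simp add: psi_phi)
  also have "\<dots> = (\<Sum>i<p. (B x (zs i) / cz i) * B (zs i) y) + (\<Sum>k<m. B x (us k) * B (ls k) y)
     + (\<Sum>k<m. B x (ls k) * B (us k) y)"
    unfolding psi_def phi_def by (simp add: B_simps B_sum_left cong: sum_lessThan_cong)
  also have "\<dots> = tform p m Sm (phi x) (phi y)"
    using z_part unfolding tform_def
    by (simp add: phi_def sum.distrib B_sym[of "ls _" y] B_sym[of "us _" y] mult.commute cong: sum_lessThan_cong)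
  finally show ?thesis .
qed

text \<open>Sm is symmetric and nondegenerate since its diagonal entries are nonzero.\<close>
lemma Sm_valid: "valid_zform p Sm"
  unfolding valid_zform_def
proof (intro conjI allI ballI impI)
  show "Sm i j = Sm j i" for i j unfolding Sm_def by auto
  fix v assume v: "v \<in> vec_on p" and orth: "\<forall>w\<in>vec_on p. sform p Sm v w = 0"
  show "v = (\<lambda>_. 0)"
  proof
    fix i show "v i = 0"
    proof (cases "i < p")
      case True
      let ?e = "\<lambda>j. if j = i then 1 else (0::real)"
      have "sform p Sm v ?e = (\<Sum>a<p. Sm a i * v a)" unfolding sform_def
        by (rule sum.cong) (auto simp: sum_single[of _ i] True)
      also have "\<dots> = cz i * v i" by (subst sum_single[of _ i]) (auto simp: Sm_def True)
      finally have "cz i * v i = 0" using orth True unfolding vec_on_def by force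
      then show ?thesis using cz_nonzero[OF True] by simp
    next
      case False then show ?thesis using v unfolding vec_on_def by auto
    qed
  qed
qed

text \<open>Cm is alternating by antisymmetry of the bracket and ad-invariance.\<close>
lemma Cm_alternating: "alternating3 Cm"
  unfolding alternating3_def
proof (intro allI conjI)
  fix i j k
  show "Cm i j k = - Cm j i k"
    unfolding Cm_def using alternating_antisym[OF br_bilinear br_alternating, of "us i" "us j"]
    by (auto simp: B_simps)
  show "Cm i j k = - Cm i k j"
    unfolding Cm_def using ad_inv[of "us i" "us j" "us k"] B_sym[of "us j" "br (us i) (us k)"] by auto
qed

lemma phi_metric_lie_iso: "metric_lie_iso br B p m Sm Cm phi"
  unfolding metric_lie_iso_def using phi_linear phi_bij phi_bracket phi_form by blast

end

theorem mainTheorem17: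
  fixes br :: "'g::euclidean_space \<Rightarrow> 'g \<Rightarrow> 'g" and B :: "'g \<Rightarrow> 'g \<Rightarrow> real"
  assumes "lie_algebra br"
    and "nondeg_sym_form B"
    and "ad_invariant br B"
    and "flat br"
  shows "\<exists>p m S C \<phi>. valid_zform p S \<and> alternating3 C \<and> metric_lie_iso br B p m S C \<phi>"
proof -
  interpret nil2_metric_lie B br
  proof unfold_locales
    show "bilinear B" "\<And>x y. B x y = B y x" "\<And>x. (\<forall>y. B x y = 0) \<Longrightarrow> x = 0"
      using assms(2) unfolding nondeg_sym_form_def by blast+
    show "bilinear br" "\<And>x. br x x = 0" using assms(1) unfolding lie_algebra_def by blast+
    show "\<And>x y z. B (br x y) z = - B y (br x z)" using assms(3) unfolding ad_invariant_def by blast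
    show "\<And>x y z. br (br x y) z = 0" using flat_two_step_nilpotent[OF assms(1,4)] .
  qed
  obtain p zs m ls us where "frame_for UNIV (Collect central) p zs m ls us"
    using center_frame_exists by blast
  then interpret central_frame B br p zs m ls us by unfold_locales
  show ?thesis using Sm_valid Cm_alternating phi_metric_lie_iso by blast
qed

end
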